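(* Let $(Q,\cdot)$ and $(Q,\ast)$ be Ward quasigroups on the same set $Q$. Then the following statements are equivalent: (1) $(Q,\cdot,\ast)$ is a double magma, i.e. $(x\cdot y)\ast(z\cdot w)=(x\ast z)\cdot(y\ast w)$ for all $x,y,z,w\in Q$; (2) the operations $\cdot$ and $\ast$ coincide and $(Q,\cdot)$ is medial; (3) the operations $\cdot$ and $\ast$ coincide and $(Q,\cdot)$ is left modular; (4) the operations $\cdot$ and $\ast$ coincide and $(Q,\cdot)$ satisfies $xy\cdot z=xz\cdot y$ and $x\cdot yz=xy\cdot ez$ for all $x,y,z\in Q$, where $e$ is the element with $xx=e$ for all $x$; (5) the operations $\cdot$ and $\ast$ coincide and $(Q,\cdot)$ is induced by an abelian group, i.e. there is an abelian group $(Q,\circ)$ with $x\cdot y=x\circ y^{-1}$ for all $x,y\in Q$.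
   Context: A quasigroup is a magma $(Q,\cdot)$ in which for all $a,b\in Q$ the equations $ax=b$ and $ya=b$ have unique solutions $x,y\in Q$. A Ward quasigroup is a quasigroup $(Q,\cdot)$ satisfying $(xz)(yz)=xy$ for all $x,y,z\in Q$; in such a quasigroup there is an element $e$ with $xx=e$ for all $x\in Q$. A magma is medial if $xy\cdot zw=xz\cdot yw$ and left modular if $x\cdot yz=z\cdot yx$ for all $x,y,z,w$. Juxtaposition denotes $\cdot$, and $xy\cdot z$ means $(xy)z$. *)

theory Defs
  imports "HOL-Algebra.Group"
begin

definition closed_op :: "'a set \<Rightarrow> ('a \<Rightarrow> 'a \<Rightarrow> 'a) \<Rightarrow> bool" where
  "closed_op Q m \<longleftrightarrow> (\<forall>x\<in>Q. \<forall>y\<in>Q. m x y \<in> Q)"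

definition quasigroup :: "'a set \<Rightarrow> ('a \<Rightarrow> 'a \<Rightarrow> 'a) \<Rightarrow> bool" where
  "quasigroup Q m \<longleftrightarrow> closed_op Q m \<and>
     (\<forall>a\<in>Q. \<forall>b\<in>Q. (\<exists>!x. x \<in> Q \<and> m a x = b) \<and> (\<exists>!y. y \<in> Q \<and> m y a = b))"

definition ward_quasigroup :: "'a set \<Rightarrow> ('a \<Rightarrow> 'a \<Rightarrow> 'a) \<Rightarrow> bool" where
  "ward_quasigroup Q m \<longleftrightarrow> quasigroup Q m \<and>
     (\<forall>x\<in>Q. \<forall>y\<in>Q. \<forall>z\<in>Q. m (m x z) (m y z) = m x y)"

definition double_magma :: "'a set \<Rightarrow> ('a \<Rightarrow> 'a \<Rightarrow> 'a) \<Rightarrow> ('a \<Rightarrow> 'a \<Rightarrow> 'a) \<Rightarrow> bool" where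
  "double_magma Q m s \<longleftrightarrow>
     (\<forall>x\<in>Q. \<forall>y\<in>Q. \<forall>z\<in>Q. \<forall>w\<in>Q. s (m x y) (m z w) = m (s x z) (s y w))"

definition medial :: "'a set \<Rightarrow> ('a \<Rightarrow> 'a \<Rightarrow> 'a) \<Rightarrow> bool" where
  "medial Q m \<longleftrightarrow>
     (\<forall>x\<in>Q. \<forall>y\<in>Q. \<forall>z\<in>Q. \<forall>w\<in>Q. m (m x y) (m z w) = m (m x z) (m y w))"

definition left_modular :: "'a set \<Rightarrow> ('a \<Rightarrow> 'a \<Rightarrow> 'a) \<Rightarrow> bool" where
  "left_modular Q m \<longleftrightarrow> (\<forall>x\<in>Q. \<forall>y\<in>Q. \<forall>z\<in>Q. m x (m y z) = m z (m y x))"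

definition induced_by_abelian_group :: "'a set \<Rightarrow> ('a \<Rightarrow> 'a \<Rightarrow> 'a) \<Rightarrow> bool" where
  "induced_by_abelian_group Q m \<longleftrightarrow>
     (\<exists>G :: 'a monoid. comm_group G \<and> carrier G = Q \<and>
        (\<forall>x\<in>Q. \<forall>y\<in>Q. m x y = x \<otimes>\<^bsub>G\<^esub> inv\<^bsub>G\<^esub> y))"

end

theory Submission
  imports Defs
begin

(* A Ward quasigroup (Q, m) with e = x x is induced by the group x o y = x (e y), i.e.
   m x y = x o y^-1 with y^-1 = e y. For a magma induced by a group, each of left modularity,
   mediality and the identities of (4) holds exactly when the group is abelian: one direction
   is group algebra, the other specialises variables to the unit, where each identity
   says that inverses commute. Finally, applying the interchange law of a double magma to
   squares shows that the two Ward quasigroups have the same unit, and applying it to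
   (y x)(y y) then gives e (x y) = e (s x y), so m and s coincide; for a single operation
   the interchange law is mediality. *)

lemma (in group) comm_group_if_inv_comm:
  assumes "\<And>x y. x \<in> carrier G \<Longrightarrow> y \<in> carrier G \<Longrightarrow> inv x \<otimes> inv y = inv y \<otimes> inv x"
  shows "comm_group G"
proof (rule group_comm_groupI)
  fix x y assume "x \<in> carrier G" "y \<in> carrier G"
  then show "x \<otimes> y = y \<otimes> x"
    using assms[of "inv x" "inv y"] by simp
qed

locale group_induced = group G for G :: "'a monoid" (structure) +
  fixes m :: "'a \<Rightarrow> 'a \<Rightarrow> 'a"
  assumes right_div: "x \<in> carrier G \<Longrightarrow> y \<in> carrier G \<Longrightarrow> m x y = x \<otimes> inv y"
begin

lemma one_mult_mult: "y \<in> carrier G \<Longrightarrow> z \<in> carrier G \<Longrightarrow> m (m \<one> y) z = inv y \<otimes> inv z"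
  by (simp add: right_div)

lemma comm_group_if_one_mult_swap:
  assumes "\<And>y z. y \<in> carrier G \<Longrightarrow> z \<in> carrier G \<Longrightarrow> m (m \<one> y) z = m (m \<one> z) y"
  shows "comm_group G"
  using assms by (intro comm_group_if_inv_comm) (simp add: one_mult_mult)

lemma left_modular_iff_comm_group: "left_modular (carrier G) m \<longleftrightarrow> comm_group G"
proof
  assume lm: "left_modular (carrier G) m"
  show "comm_group G"
  proof (rule group_comm_groupI)
    fix x y assume x: "x \<in> carrier G" and y: "y \<in> carrier G"
    have "x \<otimes> y = m x (m \<one> y)"
      using x y by (simp add: right_div)
    also have "\<dots> = m y (m \<one> x)"
      using lm x y unfolding left_modular_def by blast
    also have "\<dots> = y \<otimes> x"
      using x y by (simp add: right_div)
    finally show "x \<otimes> y = y \<otimes> x" .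
  qed
next
  assume "comm_group G"
  then interpret comm_group G .
  show "left_modular (carrier G) m"
    unfolding left_modular_def by (simp add: right_div inv_mult m_ac)
qed

lemma medial_iff_comm_group: "medial (carrier G) m \<longleftrightarrow> comm_group G"
proof
  assume "medial (carrier G) m"
  then have "m (m \<one> y) (m z \<one>) = m (m \<one> z) (m y \<one>)"
    if "y \<in> carrier G" "z \<in> carrier G" for y z
    using that unfolding medial_def by blast
  then show "comm_group G"
    by (intro comm_group_if_one_mult_swap) (simp add: right_div)
next
  assume "comm_group G"
  then interpret comm_group G .
  show "medial (carrier G) m"
    unfolding medial_def by (simp add: right_div inv_mult m_ac)
qed

lemma right_permutable_identities_iff_comm_group:
  "(\<exists>e\<in>carrier G. (\<forall>x\<in>carrier G. m x x = e) \<and>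
      (\<forall>x\<in>carrier G. \<forall>y\<in>carrier G. \<forall>z\<in>carrier G.
         m (m x y) z = m (m x z) y \<and> m x (m y z) = m (m x y) (m e z)))
   \<longleftrightarrow> comm_group G"
proof
  assume "\<exists>e\<in>carrier G. (\<forall>x\<in>carrier G. m x x = e) \<and>
      (\<forall>x\<in>carrier G. \<forall>y\<in>carrier G. \<forall>z\<in>carrier G.
         m (m x y) z = m (m x z) y \<and> m x (m y z) = m (m x y) (m e z))"
  then show "comm_group G"
    by (intro comm_group_if_one_mult_swap) blast
next
  assume "comm_group G"
  then interpret comm_group G .
  show "\<exists>e\<in>carrier G. (\<forall>x\<in>carrier G. m x x = e) \<and>
      (\<forall>x\<in>carrier G. \<forall>y\<in>carrier G. \<forall>z\<in>carrier G.
         m (m x y) z = m (m x z) y \<and> m x (m y z) = m (m x y) (m e z))"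
    by (intro bexI[of _ \<one>]) (simp_all add: right_div inv_mult m_ac)
qed

lemma induced_by_abelian_group_iff_comm_group:
  "induced_by_abelian_group (carrier G) m \<longleftrightarrow> comm_group G"
proof
  assume "induced_by_abelian_group (carrier G) m"
  then obtain H :: "'a monoid" where H: "comm_group H" "carrier H = carrier G"
    and div_H: "\<forall>x\<in>carrier G. \<forall>y\<in>carrier G. m x y = x \<otimes>\<^bsub>H\<^esub> inv\<^bsub>H\<^esub> y"
    unfolding induced_by_abelian_group_def by blast
  interpret H: group_induced H m
    using H div_H by (simp add: group_induced_def group_induced_axioms_def comm_group_def)
  have "left_modular (carrier G) m"
    using H.left_modular_iff_comm_group H by simp
  then show "comm_group G"
    by (simp add: left_modular_iff_comm_group)
next
  assume "comm_group G"
  then show "induced_by_abelian_group (carrier G) m"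
    unfolding induced_by_abelian_group_def by (blast intro: right_div)
qed

end

locale nonempty_ward_quasigroup =
  fixes Q :: "'a set" and m :: "'a \<Rightarrow> 'a \<Rightarrow> 'a"
  assumes ward_quasigroup: "ward_quasigroup Q m"
    and nonempty: "Q \<noteq> {}"
begin

lemma mult_closed: "x \<in> Q \<Longrightarrow> y \<in> Q \<Longrightarrow> m x y \<in> Q"
  using ward_quasigroup unfolding ward_quasigroup_def quasigroup_def closed_op_def by blast

lemma left_cancel: "a \<in> Q \<Longrightarrow> x \<in> Q \<Longrightarrow> y \<in> Q \<Longrightarrow> m a x = m a y \<Longrightarrow> x = y"
  using ward_quasigroup mult_closed unfolding ward_quasigroup_def quasigroup_def by metis

lemma left_divisible: "a \<in> Q \<Longrightarrow> b \<in> Q \<Longrightarrow> \<exists>x\<in>Q. m a x = b"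
  using ward_quasigroup unfolding ward_quasigroup_def quasigroup_def by blast

lemma ward: "x \<in> Q \<Longrightarrow> y \<in> Q \<Longrightarrow> z \<in> Q \<Longrightarrow> m (m x z) (m y z) = m x y"
  using ward_quasigroup unfolding ward_quasigroup_def by blast

lemma mult_self_const: "x \<in> Q \<Longrightarrow> y \<in> Q \<Longrightarrow> m y y = m x x"
  by (metis left_divisible ward)

definition e :: 'a where
  "e = m (SOME x. x \<in> Q) (SOME x. x \<in> Q)"

lemma e_closed: "e \<in> Q"
  using nonempty by (simp add: e_def mult_closed some_in_eq)

lemma mult_self: "x \<in> Q \<Longrightarrow> m x x = e"
  using nonempty mult_self_const[of "SOME x. x \<in> Q" x] by (simp add: e_def some_in_eq)

lemma mult_e: "x \<in> Q \<Longrightarrow> m x e = x"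
proof -
  assume x: "x \<in> Q"
  then obtain z where z: "z \<in> Q" "m x z = x"
    using left_divisible by blast
  have "m x e = m (m x z) (m z z)"
    using z by (simp add: mult_self)
  also have "\<dots> = m x z"
    using x z(1) z(1) by (rule ward)
  finally show ?thesis
    using z(2) by simp
qed

lemma e_mult_mult: "y \<in> Q \<Longrightarrow> z \<in> Q \<Longrightarrow> m e (m y z) = m z y"
  using ward[of z y z] by (simp add: mult_self)

lemma e_mult_e_mult: "x \<in> Q \<Longrightarrow> m e (m e x) = x"
  using e_mult_mult[of e x] by (simp add: e_closed mult_e)

lemma mult_mult: "x \<in> Q \<Longrightarrow> y \<in> Q \<Longrightarrow> z \<in> Q \<Longrightarrow> m (m x y) z = m x (m z (m e y))"
proof -
  assume x: "x \<in> Q" and y: "y \<in> Q" and z: "z \<in> Q"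
  define y' where "y' = m e y"
  have y': "y' \<in> Q" "m e y' = y"
    using y by (simp_all add: y'_def e_closed mult_closed e_mult_e_mult)
  have "m x (m z y') = m (m x (m e y')) (m (m z y') (m e y'))"
    using x z y'(1) ward[of x "m z y'" "m e y'"] by (simp add: mult_closed e_closed)
  also have "m (m z y') (m e y') = z"
    using z y'(1) ward[of z e y'] by (simp add: e_closed mult_e)
  finally show ?thesis
    using y' by (simp add: y'_def)
qed

definition ward_group :: "'a monoid" where
  "ward_group = \<lparr>carrier = Q, mult = (\<lambda>x y. m x (m e y)), one = e\<rparr>"

lemma ward_group_carrier [simp]: "carrier ward_group = Q"
  and ward_group_one [simp]: "\<one>\<^bsub>ward_group\<^esub> = e"
  and ward_group_mult [simp]: "x \<otimes>\<^bsub>ward_group\<^esub> y = m x (m e y)"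
  by (simp_all add: ward_group_def)

lemma group_ward_group: "group ward_group"
proof (rule groupI)
  fix x y z assume x: "x \<in> carrier ward_group" and y: "y \<in> carrier ward_group"
    and z: "z \<in> carrier ward_group"
  have "m (m x (m e y)) (m e z) = m x (m (m e z) y)"
    using x y z mult_mult[of x "m e y" "m e z"] by (simp add: mult_closed e_closed e_mult_e_mult)
  also have "\<dots> = m x (m e (m y (m e z)))"
    using y z by (simp add: e_mult_mult mult_closed e_closed)
  finally show "x \<otimes>\<^bsub>ward_group\<^esub> y \<otimes>\<^bsub>ward_group\<^esub> z
      = x \<otimes>\<^bsub>ward_group\<^esub> (y \<otimes>\<^bsub>ward_group\<^esub> z)"
    by simp
next
  fix x assume x: "x \<in> carrier ward_group"
  show "\<one>\<^bsub>ward_group\<^esub> \<otimes>\<^bsub>ward_group\<^esub> x = x"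
    using x by (simp add: e_mult_e_mult)
  have "m e x \<otimes>\<^bsub>ward_group\<^esub> x = \<one>\<^bsub>ward_group\<^esub>"
    using x by (simp add: mult_self mult_closed e_closed)
  then show "\<exists>y\<in>carrier ward_group. y \<otimes>\<^bsub>ward_group\<^esub> x = \<one>\<^bsub>ward_group\<^esub>"
    using x by (auto simp: mult_closed e_closed)
qed (simp_all add: mult_closed e_closed)

lemma ward_group_inv: "y \<in> Q \<Longrightarrow> inv\<^bsub>ward_group\<^esub> y = m e y"
  by (rule group.inv_equality[OF group_ward_group])
    (simp_all add: mult_self e_mult_e_mult mult_closed e_closed)

sublocale G: group_induced ward_group m
proof (rule group_induced.intro[OF group_ward_group], unfold_locales)
  fix x y assume "x \<in> carrier ward_group" "y \<in> carrier ward_group"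
  then show "m x y = x \<otimes>\<^bsub>ward_group\<^esub> inv\<^bsub>ward_group\<^esub> y"
    by (simp add: ward_group_inv e_mult_e_mult)
qed

end

lemma double_magma_ward_eq:
  assumes "nonempty_ward_quasigroup Q m" and "nonempty_ward_quasigroup Q s"
    and dm: "double_magma Q m s" and x: "x \<in> Q" and y: "y \<in> Q"
  shows "m x y = s x y"
proof -
  interpret M: nonempty_ward_quasigroup Q m by fact
  interpret S: nonempty_ward_quasigroup Q s by fact
  have "S.e = s (m x x) (m x x)"
    using x by (simp add: M.mult_self S.mult_self M.e_closed)
  also have "\<dots> = m (s x x) (s x x)"
    using dm x unfolding double_magma_def by blast
  also have "\<dots> = M.e"
    using x by (simp add: M.mult_self S.mult_self S.e_closed)
  finally have units: "M.e = S.e" ..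
  have "m M.e (m x y) = m y x"
    using x y by (rule M.e_mult_mult)
  also have "\<dots> = s (m y x) (m y y)"
    using x y by (simp add: M.mult_self S.mult_e units M.mult_closed)
  also have "\<dots> = m (s y y) (s x y)"
    using dm x y unfolding double_magma_def by blast
  also have "\<dots> = m M.e (s x y)"
    using y by (simp add: S.mult_self units)
  finally show ?thesis
    by (rule M.left_cancel[OF M.e_closed M.mult_closed[OF x y] S.mult_closed[OF x y]])
qed

lemma double_magma_iff_medial_if_eq:
  assumes "\<And>x y. x \<in> Q \<Longrightarrow> y \<in> Q \<Longrightarrow> m x y \<in> Q"
    and "\<And>x y. x \<in> Q \<Longrightarrow> y \<in> Q \<Longrightarrow> m x y = s x y"
  shows "double_magma Q m s \<longleftrightarrow> medial Q m"
  unfolding double_magma_def medial_def using assms by simp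

theorem theorem3p1:
  fixes Q :: "'a set" and m s :: "'a \<Rightarrow> 'a \<Rightarrow> 'a"
  assumes nonempty: "Q \<noteq> {}"
    and wm: "ward_quasigroup Q m"
    and ws: "ward_quasigroup Q s"
  defines "coincide \<equiv> (\<forall>x\<in>Q. \<forall>y\<in>Q. m x y = s x y)"
  shows "(double_magma Q m s \<longleftrightarrow> coincide \<and> medial Q m)
    \<and> (coincide \<and> medial Q m \<longleftrightarrow> coincide \<and> left_modular Q m)
    \<and> (coincide \<and> left_modular Q m \<longleftrightarrow>
         coincide \<and> (\<exists>e\<in>Q. (\<forall>x\<in>Q. m x x = e) \<and>
            (\<forall>x\<in>Q. \<forall>y\<in>Q. \<forall>z\<in>Q. m (m x y) z = m (m x z) y \<and>
                                   m x (m y z) = m (m x y) (m e z))))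
    \<and> (coincide \<and> left_modular Q m \<longleftrightarrow> coincide \<and> induced_by_abelian_group Q m)"
proof -
  have M: "nonempty_ward_quasigroup Q m" and S: "nonempty_ward_quasigroup Q s"
    using nonempty wm ws by (simp_all add: nonempty_ward_quasigroup_def)
  interpret M: nonempty_ward_quasigroup Q m by (fact M)
  have "coincide" if "double_magma Q m s"
    unfolding coincide_def using double_magma_ward_eq[OF M S that] by blast
  moreover have "double_magma Q m s \<longleftrightarrow> medial Q m" if coincide
    using that unfolding coincide_def by (intro double_magma_iff_medial_if_eq M.mult_closed) blast+
  moreover have "medial Q m \<longleftrightarrow> comm_group M.ward_group"
    using M.G.medial_iff_comm_group by (simp only: M.ward_group_carrier)
  moreover have "left_modular Q m \<longleftrightarrow> comm_group M.ward_group"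
    using M.G.left_modular_iff_comm_group by (simp only: M.ward_group_carrier)
  moreover have "(\<exists>e\<in>Q. (\<forall>x\<in>Q. m x x = e) \<and>
      (\<forall>x\<in>Q. \<forall>y\<in>Q. \<forall>z\<in>Q. m (m x y) z = m (m x z) y \<and> m x (m y z) = m (m x y) (m e z)))
    \<longleftrightarrow> comm_group M.ward_group"
    using M.G.right_permutable_identities_iff_comm_group by (simp only: M.ward_group_carrier)
  moreover have "induced_by_abelian_group Q m \<longleftrightarrow> comm_group M.ward_group"
    using M.G.induced_by_abelian_group_iff_comm_group by (simp only: M.ward_group_carrier)
  ultimately show ?thesis
    by argo
qed

end
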